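(* For any maximal isotropic subspace $\mathcal{M}\subset{}^d\mathcal{K}$, \begin{equation*} \langle\varphi, -\Delta(\mathcal{M},\underline{a})\psi\rangle_{\mathcal{H}} =\sum_{j\in\mathcal{E}\cup\mathcal{I}} \langle\varphi^\prime,\psi^\prime\rangle_{\mathcal{H}_j} +\langle[\varphi], Q_{\mathcal{M}}[\psi]\rangle_{{}^d\mathcal{K}} \end{equation*} holds for all $\varphi,\psi\in\operatorname{Dom}\Delta(\mathcal{M},\underline{a})$, where \begin{equation*} Q_{\mathcal{M}} = - \begin{pmatrix} -B^\dagger \\ A^\dagger \end{pmatrix} (A A^\dagger + B B^\dagger)^{-1} A B^\dagger (A A^\dagger + B B^\dagger)^{-1} (-B,A) \end{equation*} for any $(A,B)$ with $\mathcal{M}=\mathcal{M}(A,B)$.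
   Context: Let $\mathcal{G}=(V,\mathcal{I},\mathcal{E},\partial)$ be a finite connected graph with internal edges $\mathcal{I}$ (identified with intervals $I_i=[0,a_i]$, $a_i>0$) and external edges $\mathcal{E}$ (identified with $I_e=[0,\infty)$); $\underline{a}=\{a_i\}_{i\in\mathcal{I}}$. Let $\mathcal{H}=\bigoplus_{j\in\mathcal{E}\cup\mathcal{I}}\mathcal{H}_j$ with $\mathcal{H}_j=L^2(I_j)$. Let $\mathcal{K}=\mathcal{K}_{\mathcal{E}}\oplus\mathcal{K}_{\mathcal{I}}^{(-)}\oplus\mathcal{K}_{\mathcal{I}}^{(+)}$ with $\mathcal{K}_{\mathcal{E}}\cong\mathbb{C}^{|\mathcal{E}|}$, $\mathcal{K}_{\mathcal{I}}^{(\pm)}\cong\mathbb{C}^{|\mathcal{I}|}$, and ${}^d\mathcal{K}=\mathcal{K}\oplus\mathcal{K}$ with the symplectic form $\omega(\chi,\chi')=\langle\chi,J\chi'\rangle$, $J=\begin{pmatrix}0&\mathbb{I}\\-\mathbb{I}&0\end{pmatrix}$. For $\psi$ with $\psi_j,\psi_j'$ absolutely continuous and $\psi_j''\in L^2$, set $[\psi]=\underline{\psi}\oplus\underline{\psi}'\in{}^d\mathcal{K}$, where $\underline{\psi}=(\{\psi_e(0)\}_{e\in\mathcal{E}},\{\psi_i(0)\}_{i\in\mathcal{I}},\{\psi_i(a_i)\}_{i\in\mathcal{I}})$ and $\underline{\psi}'=(\{\psi_e'(0)\}_{e\in\mathcal{E}},\{\psi_i'(0)\}_{i\in\mathcal{I}},\{-\psi_i'(a_i)\}_{i\in\mathcal{I}})$.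 A maximal isotropic subspace $\mathcal{M}\subset{}^d\mathcal{K}$ can be written as $\mathcal{M}(A,B)=\operatorname{Ker}(A,B)$ with linear maps $A,B:\mathcal{K}\to\mathcal{K}$ such that $(A,B)$ has maximal rank $|\mathcal{E}|+2|\mathcal{I}|$ and $AB^\dagger$ is self-adjoint. $\Delta(\mathcal{M},\underline{a})$ is the self-adjoint operator acting as $(\Delta\psi)_j=\psi_j''$ on the domain of such $\psi$ with $[\psi]\in\mathcal{M}$ (i.e. $A\underline{\psi}+B\underline{\psi}'=0$). The operator $Q_{\mathcal{M}}$ equals $P_{\mathcal{M}}QP_{\mathcal{M}}$ with $Q=\begin{pmatrix}0&\mathbb{I}\\0&0\end{pmatrix}$ and $P_{\mathcal{M}}$ the orthogonal projection onto $\mathcal{M}$ in ${}^d\mathcal{K}$; it depends only on $\mathcal{M}$. Block matrices are with respect to ${}^d\mathcal{K}=\mathcal{K}\oplus\mathcal{K}$. *)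

theory Defs
  imports "HOL-Analysis.Analysis" "Jordan_Normal_Form.Gauss_Jordan_Elimination"
          "Jordan_Normal_Form.Schur_Decomposition"
begin

no_notation Finite_Cartesian_Product.vec_nth (infixl "$" 90)

definition hblock :: "complex mat \<Rightarrow> complex mat \<Rightarrow> complex mat" where
  "hblock X Y = mat (dim_row X) (dim_col X + dim_col Y)
     (\<lambda>(i,j). if j < dim_col X then X $$ (i,j) else Y $$ (i, j - dim_col X))"

definition vblock :: "complex mat \<Rightarrow> complex mat \<Rightarrow> complex mat" where
  "vblock X Y = mat (dim_row X + dim_row Y) (dim_col X)
     (\<lambda>(i,j). if i < dim_row X then X $$ (i,j) else Y $$ (i - dim_row X, j))"

definition kinner :: "complex vec \<Rightarrow> complex vec \<Rightarrow> complex" where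
  "kinner x y = (\<Sum>k<dim_vec x. cnj (x $ k) * y $ k)"

definition MAB :: "nat \<Rightarrow> complex mat \<Rightarrow> complex mat \<Rightarrow> complex vec set" where
  "MAB n A B = {w \<in> carrier_vec (2*n). hblock A B *\<^sub>v w = 0\<^sub>v n}"

definition maximal_rank :: "nat \<Rightarrow> complex mat \<Rightarrow> complex mat \<Rightarrow> bool" where
  "maximal_rank n A B \<longleftrightarrow> (\<forall>z\<in>carrier_vec n. \<exists>w\<in>carrier_vec (2*n). hblock A B *\<^sub>v w = z)"

definition is_orth_proj :: "nat \<Rightarrow> complex vec set \<Rightarrow> complex mat \<Rightarrow> bool" where
  "is_orth_proj m S P \<longleftrightarrow> P \<in> carrier_mat m m \<and>
     (\<forall>w\<in>carrier_vec m. P *\<^sub>v w \<in> S \<and> (\<forall>\<mu>\<in>S. kinner \<mu> (w - P *\<^sub>v w) = 0))"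

definition Qmat :: "nat \<Rightarrow> complex mat" where
  "Qmat n = four_block_mat (0\<^sub>m n n) (1\<^sub>m n) (0\<^sub>m n n) (0\<^sub>m n n)"

definition QAB :: "complex mat \<Rightarrow> complex mat \<Rightarrow> complex mat" where
  "QAB A B = (let R = the (mat_inverse (A * mat_adjoint A + B * mat_adjoint B)) in
     - (vblock (- mat_adjoint B) (mat_adjoint A) * R * (A * mat_adjoint B) * R * hblock (- B) A))"

section \<open>The metric graph: edges j < nE are external ([0,oo)), edges nE + i (i < nI) are
  internal ([0, a i])\<close>

definition edge_int :: "nat \<Rightarrow> (nat \<Rightarrow> real) \<Rightarrow> nat \<Rightarrow> real set" where
  "edge_int nE a j = (if j < nE then {0..} else {0..a (j - nE)})"

definition square_integrable :: "real set \<Rightarrow> (real \<Rightarrow> complex) \<Rightarrow> bool" where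
  "square_integrable I f \<longleftrightarrow> set_borel_measurable lborel I f \<and>
     set_integrable lborel I (\<lambda>x. (cmod (f x))\<^sup>2)"

definition ac_with_deriv :: "real set \<Rightarrow> (real \<Rightarrow> complex) \<Rightarrow> (real \<Rightarrow> complex) \<Rightarrow> bool" where
  "ac_with_deriv I f g \<longleftrightarrow> (\<forall>x\<in>I. set_integrable lborel {0..x} g \<and>
      f x = f 0 + (LINT t:{0..x}|lborel. g t))"

definition edge_H2 :: "real set \<Rightarrow> (real \<Rightarrow> complex) \<Rightarrow> (real \<Rightarrow> complex) \<Rightarrow> (real \<Rightarrow> complex) \<Rightarrow> bool" where
  "edge_H2 I f f1 f2 \<longleftrightarrow> square_integrable I f \<and> ac_with_deriv I f f1 \<and>
      ac_with_deriv I f1 f2 \<and> square_integrable I f2"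

text \<open>Boundary values [psi] = psi_bar (+) psi_bar' in dK = C^n + C^n, n = nE + 2 nI.
  Components: external edges at 0; internal edges at 0; internal edges at a_i
  (derivative with a minus sign).\<close>
definition bvals :: "nat \<Rightarrow> nat \<Rightarrow> (nat \<Rightarrow> real) \<Rightarrow> (nat \<Rightarrow> real \<Rightarrow> complex) \<Rightarrow> (nat \<Rightarrow> real \<Rightarrow> complex)
    \<Rightarrow> complex vec" where
  "bvals nE nI a f f1 = Matrix.vec (2 * (nE + 2 * nI)) (\<lambda>k.
     (let n = nE + 2 * nI in
      if k < n then
        (if k < nE + nI then f k 0 else f (k - nI) (a (k - nI - nE)))
      else let l = k - n in
        (if l < nE + nI then f1 l 0 else - f1 (l - nI) (a (l - nI - nE)))))"

definition in_dom :: "nat \<Rightarrow> nat \<Rightarrow> (nat \<Rightarrow> real) \<Rightarrow> complex mat \<Rightarrow> complex mat \<Rightarrow>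
    (nat \<Rightarrow> real \<Rightarrow> complex) \<Rightarrow> (nat \<Rightarrow> real \<Rightarrow> complex) \<Rightarrow> (nat \<Rightarrow> real \<Rightarrow> complex) \<Rightarrow> bool" where
  "in_dom nE nI a A B f f1 f2 \<longleftrightarrow>
     (\<forall>j < nE + nI. edge_H2 (edge_int nE a j) (f j) (f1 j) (f2 j)) \<and>
     bvals nE nI a f f1 \<in> MAB (nE + 2 * nI) A B"

end

theory Submission
  imports Defs
begin

text \<open>
  Integration by parts on every edge turns \<open>\<langle>\<phi>, -\<psi>''\<rangle>\<close> into \<open>\<Sum>\<langle>\<phi>',\<psi>'\<rangle>\<close> plus the
  boundary form \<open>\<langle>\<phi>_bar, \<psi>_bar'\<rangle> = \<langle>[\<phi>], Q[\<psi>]\<rangle>\<close>.  On a half-line there is no boundary term at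
  infinity: \<open>\<psi>, \<psi>'' \<in> L\<^sup>2\<close> forces \<open>\<psi>' \<in> L\<^sup>2\<close> (otherwise \<open>Re(\<psi>_bar \<psi>') = (|\<psi>|\<^sup>2)'/2\<close> would
  tend to infinity), so \<open>\<phi>_bar \<psi>'\<close> is integrable and its limit at infinity must be \<open>0\<close>.
  Since \<open>[\<phi>], [\<psi>] \<in> M\<close>, the form \<open>Q\<close> may be replaced by \<open>P\<^sub>M Q P\<^sub>M\<close>.

  For the formula put \<open>H = (A,B)\<close>, \<open>V = (-B\<^sup>\<dagger>; A\<^sup>\<dagger>)\<close> and \<open>G = AA\<^sup>\<dagger> + BB\<^sup>\<dagger>\<close>.  Self-adjointness
  of \<open>AB\<^sup>\<dagger>\<close> gives \<open>HV = 0\<close> and \<open>V\<^sup>\<dagger>H\<^sup>\<dagger> = 0\<close>, while \<open>V\<^sup>\<dagger>V = HH\<^sup>\<dagger> = G\<close> is invertible because \<open>H\<close> is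
  onto.  Hence \<open>VG\<^sup>-\<^sup>1V\<^sup>\<dagger> + H\<^sup>\<dagger>G\<^sup>-\<^sup>1H = 1\<close>, so \<open>M = Ker H = Ran V\<close> and \<open>P\<^sub>M = VG\<^sup>-\<^sup>1V\<^sup>\<dagger>\<close>; finally
  \<open>V\<^sup>\<dagger>QV = -BA\<^sup>\<dagger> = -AB\<^sup>\<dagger>\<close>.
\<close>

section \<open>Adjoints, block matrices and the inner product\<close>

lemma dim_mat_adjoint [simp]:
  "dim_row (mat_adjoint A) = dim_col A" "dim_col (mat_adjoint A) = dim_row A"
  unfolding mat_adjoint_def by auto

lemma mat_adjoint_carrier [intro]: "A \<in> carrier_mat r c \<Longrightarrow> mat_adjoint A \<in> carrier_mat c r"
  unfolding carrier_mat_def by simp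

lemma index_mat_adjoint [simp]:
  "i < dim_col A \<Longrightarrow> j < dim_row A \<Longrightarrow> mat_adjoint A $$ (i,j) = cnj (A $$ (j,i))"
  unfolding mat_adjoint_def by (simp add: mat_of_rows_index)

lemma mat_adjoint_adjoint [simp]: "mat_adjoint (mat_adjoint (A :: complex mat)) = A"
  by (rule eq_matI) auto

lemma mat_adjoint_uminus: "mat_adjoint (- (A :: complex mat)) = - mat_adjoint A"
  by (rule eq_matI) auto

lemma mat_adjoint_mult:
  fixes A B :: "complex mat"
  assumes "A \<in> carrier_mat r k" "B \<in> carrier_mat k c"
  shows "mat_adjoint (A * B) = mat_adjoint B * mat_adjoint A"
  using assms by (intro eq_matI) (auto simp: scalar_prod_def row_def col_def mult.commute intro: sum.cong)

lemma dim_hblock [simp]: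
  "dim_row (hblock X Y) = dim_row X" "dim_col (hblock X Y) = dim_col X + dim_col Y"
  unfolding hblock_def by auto

lemma dim_vblock [simp]:
  "dim_row (vblock X Y) = dim_row X + dim_row Y" "dim_col (vblock X Y) = dim_col X"
  unfolding vblock_def by auto

lemma assoc_mult_mat_dim:
  "dim_col A = dim_row B \<Longrightarrow> dim_col B = dim_row C \<Longrightarrow> A * B * C = A * (B * C)"
  by (rule assoc_mult_mat[of _ "dim_row A" "dim_col A" _ "dim_col B" _ "dim_col C"]) auto

lemma assoc_mult_mat_vec_dim:
  "dim_col A = dim_row B \<Longrightarrow> dim_col B = dim_vec v \<Longrightarrow> (A * B) *\<^sub>v v = A *\<^sub>v (B *\<^sub>v v)"
  by (rule assoc_mult_mat_vec[of _ "dim_row A" "dim_col A" _ "dim_col B"]) auto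

lemma zero_mat_mult_vec: "dim_vec v = c \<Longrightarrow> 0\<^sub>m r c *\<^sub>v v = 0\<^sub>v r"
  by (intro eq_vecI) (auto simp: scalar_prod_def)

lemma mult_mat_vec_zero: "dim_col A = c \<Longrightarrow> A *\<^sub>v 0\<^sub>v c = 0\<^sub>v (dim_row A)"
  by (intro eq_vecI) (auto simp: scalar_prod_def)

lemma hblock_carrier [simp, intro]:
  "X \<in> carrier_mat r c1 \<Longrightarrow> Y \<in> carrier_mat r c2 \<Longrightarrow> hblock X Y \<in> carrier_mat r (c1 + c2)"
  unfolding hblock_def by auto

lemma vblock_carrier [simp, intro]:
  "X \<in> carrier_mat r1 c \<Longrightarrow> Y \<in> carrier_mat r2 c \<Longrightarrow> vblock X Y \<in> carrier_mat (r1 + r2) c"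
  unfolding vblock_def by auto

lemma mat_adjoint_vblock:
  fixes X Y :: "complex mat"
  assumes "X \<in> carrier_mat r1 c" "Y \<in> carrier_mat r2 c"
  shows "mat_adjoint (vblock X Y) = hblock (mat_adjoint X) (mat_adjoint Y)"
  using assms by (intro eq_matI) (auto simp: hblock_def vblock_def)

lemma row_hblock:
  assumes "X \<in> carrier_mat r c1" "Y \<in> carrier_mat r c2" "i < r"
  shows "row (hblock X Y) i = row X i @\<^sub>v row Y i"
  using assms by (intro eq_vecI) (auto simp: hblock_def)

lemma col_vblock:
  assumes "X \<in> carrier_mat r1 c" "Y \<in> carrier_mat r2 c" "j < c"
  shows "col (vblock X Y) j = col X j @\<^sub>v col Y j"
  using assms by (intro eq_vecI) (auto simp: vblock_def)

lemma hblock_mult_vblock: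
  fixes X Y U W :: "complex mat"
  assumes "X \<in> carrier_mat r k1" "Y \<in> carrier_mat r k2" "U \<in> carrier_mat k1 c" "W \<in> carrier_mat k2 c"
  shows "hblock X Y * vblock U W = X * U + Y * W"
  using assms by (intro eq_matI) (auto simp: row_hblock col_vblock scalar_prod_append[of _ k1 _ k2])

lemma vblock_mult_hblock:
  fixes X Y U W :: "complex mat"
  assumes "X \<in> carrier_mat r1 k" "Y \<in> carrier_mat r2 k" "U \<in> carrier_mat k c1" "W \<in> carrier_mat k c2"
  shows "vblock X Y * hblock U W = four_block_mat (X * U) (X * W) (Y * U) (Y * W)"
  using assms by (intro eq_matI) (auto simp: hblock_def vblock_def scalar_prod_def intro!: sum.cong)

lemma dim_Qmat [simp]: "dim_row (Qmat n) = 2 * n" "dim_col (Qmat n) = 2 * n"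
  unfolding Qmat_def by (simp_all add: mult_2)

lemma Qmat_mult_vblock:
  fixes X Y :: "complex mat"
  assumes "X \<in> carrier_mat n c" "Y \<in> carrier_mat n c"
  shows "Qmat n * vblock X Y = vblock Y (0\<^sub>m n c)"
proof -
  have "vblock X Y = four_block_mat X (0\<^sub>m n 0) Y (0\<^sub>m n 0)"
    using assms by (intro eq_matI) (auto simp: vblock_def)
  moreover have "vblock Y (0\<^sub>m n c) = four_block_mat Y (0\<^sub>m n 0) (0\<^sub>m n c) (0\<^sub>m n 0)"
    using assms by (intro eq_matI) (auto simp: vblock_def)
  ultimately show ?thesis
    unfolding Qmat_def using assms
    by (simp add: mult_four_block_mat[OF zero_carrier_mat one_carrier_mat zero_carrier_mat
          zero_carrier_mat assms(1) zero_carrier_mat assms(2) zero_carrier_mat])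
qed

lemma Qmat_mult_append:
  assumes "u \<in> carrier_vec n" "v \<in> carrier_vec n"
  shows "Qmat n *\<^sub>v (u @\<^sub>v v) = v @\<^sub>v 0\<^sub>v n"
  unfolding Qmat_def using assms
  by (subst four_block_mat_mult_vec[of _ n n]) auto

lemma kinner_diff_right:
  "dim_vec y = dim_vec x \<Longrightarrow> dim_vec z = dim_vec x \<Longrightarrow> kinner x (y - z) = kinner x y - kinner x z"
  unfolding kinner_def by (simp add: right_diff_distrib sum_subtractf)

lemma kinner_zero_right [simp]: "dim_vec x = n \<Longrightarrow> kinner x (0\<^sub>v n) = 0"
  unfolding kinner_def by simp

lemma sum_lessThan_add: "(\<Sum>k<m + (n :: nat). f k) = (\<Sum>k<m. f k) + (\<Sum>k<n. f (m + k))"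
  by (induct n) (simp_all add: ac_simps)

lemma kinner_append:
  assumes "dim_vec u1 = dim_vec w1" "dim_vec u2 = dim_vec w2"
  shows "kinner (u1 @\<^sub>v u2) (w1 @\<^sub>v w2) = kinner u1 w1 + kinner u2 w2"
  using assms unfolding kinner_def by (simp add: sum_lessThan_add)

lemma kinner_self: "kinner x x = of_real (\<Sum>k<dim_vec x. (cmod (x $ k))\<^sup>2)"
  unfolding kinner_def of_real_sum
  by (intro sum.cong refl) (subst complex_norm_square, rule mult.commute)

lemma kinner_self_eq_0_iff: "kinner x x = 0 \<longleftrightarrow> x = 0\<^sub>v (dim_vec x)"
  unfolding kinner_self of_real_eq_0_iff
  by (subst sum_nonneg_eq_0_iff) (auto simp: vec_eq_iff)

lemma kinner_mult_mat_vec: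
  assumes A: "A \<in> carrier_mat r c" and x: "x \<in> carrier_vec r" and y: "y \<in> carrier_vec c"
  shows "kinner x (A *\<^sub>v y) = kinner (mat_adjoint A *\<^sub>v x) y"
proof -
  have "kinner x (A *\<^sub>v y) = (\<Sum>k<r. \<Sum>l<c. cnj (x $ k) * A $$ (k,l) * y $ l)"
    using A x y unfolding kinner_def
    by (simp add: scalar_prod_def atLeast0LessThan sum_distrib_left mult.assoc)
  also have "\<dots> = (\<Sum>l<c. \<Sum>k<r. cnj (x $ k) * A $$ (k,l) * y $ l)"
    by (rule sum.swap)
  also have "\<dots> = kinner (mat_adjoint A *\<^sub>v x) y"
    using A x y unfolding kinner_def
    by (simp add: scalar_prod_def atLeast0LessThan sum_distrib_left mult_ac)
  finally show ?thesis .
qed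

lemma eq_mat_via_mult_vecI:
  fixes M N :: "'a :: semiring_1 mat"
  assumes M: "M \<in> carrier_mat r c" and N: "N \<in> carrier_mat r c"
    and eq: "\<And>v. v \<in> carrier_vec c \<Longrightarrow> M *\<^sub>v v = N *\<^sub>v v"
  shows "M = N"
proof (rule eq_matI)
  fix i j assume "i < dim_row N" "j < dim_col N"
  moreover have "(M *\<^sub>v unit_vec c j) $ i = (N *\<^sub>v unit_vec c j) $ i"
    using eq[of "unit_vec c j"] by simp
  ultimately show "M $$ (i,j) = N $$ (i,j)"
    using M N by simp
qed (use M N in auto)

lemma minus_eq_0_vec_iff:
  fixes a b :: "'a :: ab_group_add vec"
  shows "a \<in> carrier_vec n \<Longrightarrow> b \<in> carrier_vec n \<Longrightarrow> a - b = 0\<^sub>v n \<longleftrightarrow> a = b"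
  by (auto simp: vec_eq_iff)

lemma is_orth_proj_fixes:
  assumes P: "is_orth_proj m S P" and diff: "\<And>x y. x \<in> S \<Longrightarrow> y \<in> S \<Longrightarrow> x - y \<in> S"
    and S: "S \<subseteq> carrier_vec m" and x: "x \<in> S"
  shows "P *\<^sub>v x = x"
proof -
  have x_carrier: "x \<in> carrier_vec m" and P_carrier: "P \<in> carrier_mat m m"
    using P S x unfolding is_orth_proj_def by auto
  have "x - P *\<^sub>v x \<in> S"
    using P x_carrier x by (auto simp: is_orth_proj_def intro: diff)
  then have "kinner (x - P *\<^sub>v x) (x - P *\<^sub>v x) = 0"
    using P x_carrier unfolding is_orth_proj_def by blast
  then have "x - P *\<^sub>v x = 0\<^sub>v m"
    using x_carrier P_carrier by (simp add: kinner_self_eq_0_iff)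
  then show ?thesis
    using x_carrier P_carrier by (simp add: minus_eq_0_vec_iff)
qed

lemma is_orth_proj_inner:
  assumes P: "is_orth_proj m S P" and x: "x \<in> S" and w: "w \<in> carrier_vec m"
    and S: "S \<subseteq> carrier_vec m"
  shows "kinner x (P *\<^sub>v w) = kinner x w"
proof -
  have "kinner x (w - P *\<^sub>v w) = 0"
    using P x w unfolding is_orth_proj_def by blast
  moreover have "kinner x (w - P *\<^sub>v w) = kinner x w - kinner x (P *\<^sub>v w)"
    using P x w S by (intro kinner_diff_right) (auto simp: is_orth_proj_def)
  ultimately show ?thesis by simp
qed

lemma is_orth_proj_unique:
  assumes P: "is_orth_proj m S P" and P': "is_orth_proj m S P'"
    and diff: "\<And>x y. x \<in> S \<Longrightarrow> y \<in> S \<Longrightarrow> x - y \<in> S"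
  shows "P = P'"
proof (rule eq_mat_via_mult_vecI)
  show P_carrier: "P \<in> carrier_mat m m" and P'_carrier: "P' \<in> carrier_mat m m"
    using P P' unfolding is_orth_proj_def by auto
  fix w :: "complex vec" assume w: "w \<in> carrier_vec m"
  define d where "d = P *\<^sub>v w - P' *\<^sub>v w"
  have "d \<in> S"
    unfolding d_def using P P' w by (auto simp: is_orth_proj_def intro: diff)
  then have "kinner d (w - P' *\<^sub>v w) = 0" "kinner d (w - P *\<^sub>v w) = 0"
    using P P' w unfolding is_orth_proj_def by blast+
  moreover have d_split: "d = (w - P' *\<^sub>v w) - (w - P *\<^sub>v w)"
    unfolding d_def using w P_carrier P'_carrier by (auto simp: vec_eq_iff)
  ultimately have "kinner d d = 0"
    using w P_carrier P'_carrier by (subst (2) d_split, subst kinner_diff_right) (auto simp: d_def)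
  then have "d = 0\<^sub>v m"
    using w P_carrier P'_carrier by (simp add: kinner_self_eq_0_iff d_def)
  then show "P *\<^sub>v w = P' *\<^sub>v w"
    unfolding d_def using w P_carrier P'_carrier by (simp add: minus_eq_0_vec_iff)
qed

lemma det_mult_mat_adjoint_neq_0:
  fixes H :: "complex mat"
  assumes H: "H \<in> carrier_mat r c"
    and surj: "\<And>z. z \<in> carrier_vec r \<Longrightarrow> \<exists>w\<in>carrier_vec c. H *\<^sub>v w = z"
  shows "det (H * mat_adjoint H) \<noteq> 0"
proof -
  have "z = 0\<^sub>v r" if z: "z \<in> carrier_vec r" and Gz: "(H * mat_adjoint H) *\<^sub>v z = 0\<^sub>v r" for z
  proof -
    have "kinner (mat_adjoint H *\<^sub>v z) (mat_adjoint H *\<^sub>v z) = kinner z (H *\<^sub>v (mat_adjoint H *\<^sub>v z))"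
      using kinner_mult_mat_vec[OF H z, of "mat_adjoint H *\<^sub>v z"] H z
      by (metis mat_adjoint_carrier mult_mat_vec_carrier)
    also have "\<dots> = kinner z ((H * mat_adjoint H) *\<^sub>v z)"
      using H z by (simp add: assoc_mult_mat_vec_dim)
    also have "\<dots> = 0"
      using z Gz by simp
    finally have adj_z: "mat_adjoint H *\<^sub>v z = 0\<^sub>v c"
      using H by (simp add: kinner_self_eq_0_iff)
    obtain w where w: "w \<in> carrier_vec c" "H *\<^sub>v w = z"
      using surj z by blast
    have "kinner z z = kinner (mat_adjoint H *\<^sub>v z) w"
      using H z w by (simp flip: kinner_mult_mat_vec)
    also have "\<dots> = 0"
      unfolding adj_z kinner_def by simp
    finally show ?thesis
      using z by (simp add: kinner_self_eq_0_iff)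
  qed
  then show ?thesis
    using H by (subst det_0_iff_vec_prod_zero[of _ r]) auto
qed

lemma kinner_Qmat:
  assumes x: "x \<in> carrier_vec (2 * n)" and y: "y \<in> carrier_vec (2 * n)"
  shows "kinner x (Qmat n *\<^sub>v y) = (\<Sum>k<n. cnj (x $ k) * y $ (n + k))"
proof -
  have split: "v = vec_first v n @\<^sub>v vec_last v n" if "v \<in> carrier_vec (2 * n)" for v :: "complex vec"
    using that by (simp add: mult_2)
  have "kinner x (Qmat n *\<^sub>v y) = kinner (vec_first x n @\<^sub>v vec_last x n) (vec_last y n @\<^sub>v 0\<^sub>v n)"
    using Qmat_mult_append[of "vec_first y n" n "vec_last y n"] split[OF x] split[OF y] by simp
  also have "\<dots> = kinner (vec_first x n) (vec_last y n)"
    by (simp add: kinner_append)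
  also have "\<dots> = (\<Sum>k<n. cnj (x $ k) * y $ (n + k))"
    using x y unfolding kinner_def by (simp add: vec_first_def vec_last_def mult_2)
  finally show ?thesis .
qed

lemma kinner_orth_proj_sandwich:
  assumes P: "is_orth_proj m S P" and diff: "\<And>x y. x \<in> S \<Longrightarrow> y \<in> S \<Longrightarrow> x - y \<in> S"
    and S: "S \<subseteq> carrier_vec m" and M: "M \<in> carrier_mat m m" and x: "x \<in> S" and y: "y \<in> S"
  shows "kinner x ((P * M * P) *\<^sub>v y) = kinner x (M *\<^sub>v y)"
proof -
  have P_carrier: "P \<in> carrier_mat m m" and y_carrier: "y \<in> carrier_vec m"
    using P S y unfolding is_orth_proj_def by auto
  have "(P * M * P) *\<^sub>v y = (P * M) *\<^sub>v (P *\<^sub>v y)"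
    using assoc_mult_mat_vec[OF mult_carrier_mat[OF P_carrier M] P_carrier y_carrier] .
  also have "\<dots> = P *\<^sub>v (M *\<^sub>v (P *\<^sub>v y))"
    using assoc_mult_mat_vec[OF P_carrier M mult_mat_vec_carrier[OF P_carrier y_carrier]] .
  finally have "(P * M * P) *\<^sub>v y = P *\<^sub>v (M *\<^sub>v (P *\<^sub>v y))" .
  then show ?thesis
    using is_orth_proj_inner[OF P x _ S] is_orth_proj_fixes[OF P diff S y] M y_carrier by simp
qed

section \<open>The orthogonal projection onto \<open>M(A,B)\<close>\<close>

lemma MAB_carrier: "MAB n A B \<subseteq> carrier_vec (2 * n)"
  unfolding MAB_def by auto

lemma MAB_diff:
  assumes "A \<in> carrier_mat n n" "B \<in> carrier_mat n n" "x \<in> MAB n A B" "y \<in> MAB n A B"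
  shows "x - y \<in> MAB n A B"
  using assms unfolding MAB_def
  by (auto simp: mult_minus_distrib_mat_vec[of _ n "2 * n"] mult_2)

locale maximal_isotropic_pair =
  fixes n :: nat and A B :: "complex mat"
  assumes A_carrier: "A \<in> carrier_mat n n" and B_carrier: "B \<in> carrier_mat n n"
    and rank: "maximal_rank n A B"
    and self_adjoint: "A * mat_adjoint B = mat_adjoint (A * mat_adjoint B)"
begin

text \<open>\<open>M(A,B)\<close> is the kernel of \<open>H\<close> and, as shown below, the range of \<open>V\<close>; \<open>R\<close> inverts the
  Gram matrix \<open>G = H H\<^sup>\<dagger> = V\<^sup>\<dagger> V\<close>.\<close>

abbreviation H where "H \<equiv> hblock A B"
abbreviation V where "V \<equiv> vblock (- mat_adjoint B) (mat_adjoint A)"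
abbreviation G where "G \<equiv> A * mat_adjoint A + B * mat_adjoint B"
abbreviation R where "R \<equiv> the (mat_inverse G)"

lemma dim_A_B [simp]: "dim_row A = n" "dim_col A = n" "dim_row B = n" "dim_col B = n"
  using A_carrier B_carrier by auto

lemma adjoint_A_carrier: "mat_adjoint A \<in> carrier_mat n n"
  using A_carrier by (rule mat_adjoint_carrier)

lemma adjoint_B_carrier: "mat_adjoint B \<in> carrier_mat n n"
  using B_carrier by (rule mat_adjoint_carrier)

lemma H_carrier: "H \<in> carrier_mat n (2 * n)"
  by (intro carrier_matI) (simp_all add: mult_2)

lemma V_carrier: "V \<in> carrier_mat (2 * n) n"
  by (intro carrier_matI) (simp_all add: mult_2)

lemma G_carrier: "G \<in> carrier_mat n n"
  by (intro carrier_matI) simp_all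

lemma B_mult_adjoint_A: "B * mat_adjoint A = A * mat_adjoint B"
  using self_adjoint mat_adjoint_mult[OF A_carrier adjoint_B_carrier] by simp

lemma adjoint_V: "mat_adjoint V = hblock (- B) A"
  using mat_adjoint_vblock[OF uminus_carrier_mat[OF adjoint_B_carrier] adjoint_A_carrier]
  by (simp add: mat_adjoint_uminus)

lemma adjoint_H: "mat_adjoint H = vblock (mat_adjoint A) (mat_adjoint B)"
  using mat_adjoint_vblock[OF adjoint_A_carrier adjoint_B_carrier] by (metis mat_adjoint_adjoint)

lemma H_mult_V: "H * V = 0\<^sub>m n n"
proof -
  have "H * V = - (A * mat_adjoint B) + A * mat_adjoint B"
    using hblock_mult_vblock[OF A_carrier B_carrier uminus_carrier_mat[OF adjoint_B_carrier]
        adjoint_A_carrier]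
    by (simp add: B_mult_adjoint_A)
  then show ?thesis
    using uminus_l_inv_mat[OF mult_carrier_mat[OF A_carrier adjoint_B_carrier]] by simp
qed

lemma adjoint_V_mult_V: "mat_adjoint V * V = G"
  using hblock_mult_vblock[OF uminus_carrier_mat[OF B_carrier] A_carrier
      uminus_carrier_mat[OF adjoint_B_carrier] adjoint_A_carrier]
    comm_add_mat[OF mult_carrier_mat[OF A_carrier adjoint_A_carrier]
      mult_carrier_mat[OF B_carrier adjoint_B_carrier]]
  by (simp add: adjoint_V)

lemma H_mult_adjoint_H: "H * mat_adjoint H = G"
  using hblock_mult_vblock[OF A_carrier B_carrier adjoint_A_carrier adjoint_B_carrier]
  by (simp add: adjoint_H)

lemma adjoint_V_mult_adjoint_H: "mat_adjoint V * mat_adjoint H = 0\<^sub>m n n"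
proof -
  have "mat_adjoint V * mat_adjoint H = - (A * mat_adjoint B) + A * mat_adjoint B"
    using hblock_mult_vblock[OF uminus_carrier_mat[OF B_carrier] A_carrier adjoint_A_carrier
        adjoint_B_carrier]
    by (simp add: adjoint_V adjoint_H B_mult_adjoint_A)
  then show ?thesis
    using uminus_l_inv_mat[OF mult_carrier_mat[OF A_carrier adjoint_B_carrier]] by simp
qed

lemma gram_inverse: "G * R = 1\<^sub>m n" "R * G = 1\<^sub>m n" "R \<in> carrier_mat n n"
proof -
  have "det G \<noteq> 0"
    using det_mult_mat_adjoint_neq_0[OF H_carrier] rank
    unfolding H_mult_adjoint_H maximal_rank_def by blast
  then obtain R' where "mat_inverse G = Some R'"
    using det_non_zero_imp_unit[OF G_carrier] mat_inverse(1)[OF G_carrier] by fastforce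
  then show "G * R = 1\<^sub>m n" "R * G = 1\<^sub>m n" "R \<in> carrier_mat n n"
    using mat_inverse(2)[OF G_carrier] by auto
qed

lemma dim_R [simp]: "dim_row R = n" "dim_col R = n"
  using gram_inverse(3) by auto

lemma adjoint_V_carrier: "mat_adjoint V \<in> carrier_mat n (2 * n)"
  using V_carrier by (rule mat_adjoint_carrier)

lemma adjoint_H_carrier: "mat_adjoint H \<in> carrier_mat (2 * n) n"
  using H_carrier by (rule mat_adjoint_carrier)

lemma resolution_of_identity: "V * R * mat_adjoint V + mat_adjoint H * R * H = 1\<^sub>m (2 * n)"
proof -
  define T where "T = hblock V (mat_adjoint H)"
  define L where "L = vblock (R * mat_adjoint V) (R * H)"
  have T: "T \<in> carrier_mat (2 * n) (2 * n)"
    unfolding T_def using hblock_carrier[OF V_carrier adjoint_H_carrier] by (simp add: mult_2)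
  have L: "L \<in> carrier_mat (2 * n) (2 * n)"
    unfolding L_def by (intro carrier_matI) (simp_all add: mult_2)
  have "L * T = four_block_mat (R * mat_adjoint V * V) (R * mat_adjoint V * mat_adjoint H)
      (R * H * V) (R * H * mat_adjoint H)"
    unfolding L_def T_def
    by (rule vblock_mult_hblock[of _ n "2 * n" _ n]) (auto intro!: carrier_matI)
  also have "\<dots> = four_block_mat (1\<^sub>m n) (0\<^sub>m n n) (0\<^sub>m n n) (1\<^sub>m n)"
    by (simp add: assoc_mult_mat_dim adjoint_V_mult_V adjoint_V_mult_adjoint_H H_mult_V H_mult_adjoint_H
        gram_inverse(2))
  also have "\<dots> = 1\<^sub>m (2 * n)"
    by (simp add: mult_2)
  finally have "T * L = 1\<^sub>m (2 * n)"
    by (rule mat_mult_left_right_inverse[OF L T])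
  moreover have "T * L = V * (R * mat_adjoint V) + mat_adjoint H * (R * H)"
    unfolding L_def T_def
    by (rule hblock_mult_vblock[of _ "2 * n" n _ n]) (auto intro!: carrier_matI)
  ultimately show ?thesis
    by (simp add: assoc_mult_mat_dim)
qed

lemma projection_carrier: "V * R * mat_adjoint V \<in> carrier_mat (2 * n) (2 * n)"
  by (intro carrier_matI) (simp_all add: mult_2)

lemma projection_fixes_MAB:
  assumes x: "x \<in> MAB n A B"
  shows "(V * R * mat_adjoint V) *\<^sub>v x = x"
proof -
  have x_carrier: "x \<in> carrier_vec (2 * n)" and x_dim: "dim_vec x = 2 * n" and Hx: "H *\<^sub>v x = 0\<^sub>v n"
    using x unfolding MAB_def by auto
  have "x = (V * R * mat_adjoint V + mat_adjoint H * R * H) *\<^sub>v x"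
    using x_carrier by (simp add: resolution_of_identity)
  also have "\<dots> = (V * R * mat_adjoint V) *\<^sub>v x + (mat_adjoint H * R * H) *\<^sub>v x"
    by (rule add_mult_distrib_mat_vec[of _ "2 * n" "2 * n"])
      (use x_carrier in \<open>auto intro!: carrier_matI simp: mult_2\<close>)
  also have "(mat_adjoint H * R * H) *\<^sub>v x = 0\<^sub>v (2 * n)"
    using x_dim by (simp add: assoc_mult_mat_vec_dim Hx mult_mat_vec_zero mult_2)
  finally have "x = (V * R * mat_adjoint V) *\<^sub>v x + 0\<^sub>v (2 * n)" .
  moreover have "(V * R * mat_adjoint V) *\<^sub>v x \<in> carrier_vec (2 * n)"
    by (intro carrier_vecI) simp
  ultimately show ?thesis
    by simp
qed

lemma is_orth_proj_MAB: "is_orth_proj (2 * n) (MAB n A B) (V * R * mat_adjoint V)"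
  unfolding is_orth_proj_def
proof (intro conjI ballI projection_carrier)
  fix w :: "complex vec" assume w: "w \<in> carrier_vec (2 * n)"
  let ?p = "(V * R * mat_adjoint V) *\<^sub>v w"
  have "H *\<^sub>v ?p = (H * V) *\<^sub>v (R *\<^sub>v (mat_adjoint V *\<^sub>v w))"
    using w by (simp add: assoc_mult_mat_vec_dim mult_2)
  then show "?p \<in> MAB n A B"
    unfolding MAB_def using w by (auto intro!: carrier_vecI simp: H_mult_V zero_mat_mult_vec mult_2)
  have adjoint_V_p: "mat_adjoint V *\<^sub>v ?p = mat_adjoint V *\<^sub>v w"
  proof -
    have "mat_adjoint V *\<^sub>v ?p = (mat_adjoint V * V * R) *\<^sub>v (mat_adjoint V *\<^sub>v w)"
      using w by (simp add: assoc_mult_mat_vec_dim assoc_mult_mat_dim mult_2)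
    moreover have "mat_adjoint V *\<^sub>v w \<in> carrier_vec n"
      by (intro carrier_vecI) simp
    ultimately show ?thesis
      by (simp add: adjoint_V_mult_V gram_inverse(1))
  qed
  fix x assume x: "x \<in> MAB n A B"
  define y where "y = (R * mat_adjoint V) *\<^sub>v x"
  have y: "y \<in> carrier_vec n"
    unfolding y_def by (intro carrier_vecI) simp
  have "dim_vec x = 2 * n"
    using x unfolding MAB_def by auto
  then have "x = V *\<^sub>v y"
    unfolding y_def using projection_fixes_MAB[OF x] by (simp add: assoc_mult_mat_vec_dim mult_2)
  moreover have "w - ?p \<in> carrier_vec (2 * n)"
    by (intro carrier_vecI) simp
  ultimately have "kinner x (w - ?p) = kinner y (mat_adjoint V *\<^sub>v (w - ?p))"
    using kinner_mult_mat_vec[OF adjoint_V_carrier y] by simp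
  also have "mat_adjoint V *\<^sub>v (w - ?p) = 0\<^sub>v n"
    using w projection_carrier adjoint_V_carrier
    by (simp add: mult_minus_distrib_mat_vec[of _ n "2 * n"] adjoint_V_p)
  finally show "kinner x (w - ?p) = 0"
    using y by simp
qed

lemma adjoint_V_mult_Qmat_mult_V: "mat_adjoint V * Qmat n * V = - (A * mat_adjoint B)"
proof -
  have "mat_adjoint V * Qmat n * V = hblock (- B) A * vblock (mat_adjoint A) (0\<^sub>m n n)"
    using Qmat_mult_vblock[OF uminus_carrier_mat[OF adjoint_B_carrier] adjoint_A_carrier]
    by (simp add: assoc_mult_mat_dim adjoint_V mult_2)
  also have "\<dots> = - B * mat_adjoint A + A * 0\<^sub>m n n"
    by (rule hblock_mult_vblock[OF uminus_carrier_mat[OF B_carrier] A_carrier adjoint_A_carrier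
          zero_carrier_mat])
  also have "\<dots> = - (A * mat_adjoint B)"
    using mult_carrier_mat[OF A_carrier adjoint_B_carrier] by (simp add: B_mult_adjoint_A)
  finally show ?thesis .
qed

lemma projection_Qmat_projection:
  "V * R * mat_adjoint V * Qmat n * (V * R * mat_adjoint V) = QAB A B"
proof -
  have "V * R * mat_adjoint V * Qmat n * (V * R * mat_adjoint V)
      = V * (R * ((mat_adjoint V * Qmat n * V) * (R * mat_adjoint V)))"
    by (simp add: assoc_mult_mat_dim mult_2)
  also have "\<dots> = - (V * R * (A * mat_adjoint B) * R * hblock (- B) A)"
    unfolding adjoint_V_mult_Qmat_mult_V by (simp add: assoc_mult_mat_dim adjoint_V)
  also have "\<dots> = QAB A B"
    unfolding QAB_def Let_def ..
  finally show ?thesis .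
qed

end

section \<open>Integration by parts on an edge\<close>

lemma integrable_pair_lborel_mult:
  fixes f g :: "real \<Rightarrow> complex"
  assumes "integrable lborel f" "integrable lborel g"
  shows "integrable (lborel \<Otimes>\<^sub>M lborel) (\<lambda>(t,s). f t * g s)"
proof (rule lborel_pair.Fubini_integrable)
  have [measurable]: "f \<in> borel_measurable lborel" "g \<in> borel_measurable lborel"
    using assms by (auto intro: borel_measurable_integrable)
  show "(\<lambda>(t,s). f t * g s) \<in> borel_measurable (lborel \<Otimes>\<^sub>M lborel)"
    by measurable
qed (use assms in \<open>simp_all add: norm_mult\<close>)

lemma integral_mult_split_diagonal:
  fixes f g :: "real \<Rightarrow> complex"
  assumes f: "integrable lborel f" and g: "integrable lborel g"
  shows "integrable lborel (\<lambda>t. f t * (LINT s:{..t}|lborel. g s))"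
    "integrable lborel (\<lambda>s. (LINT t:{..<s}|lborel. f t) * g s)"
    "(\<integral>t. f t * (LINT s:{..t}|lborel. g s) \<partial>lborel) + (\<integral>s. (LINT t:{..<s}|lborel. f t) * g s \<partial>lborel)
      = integral\<^sup>L lborel f * integral\<^sup>L lborel g"
proof -
  define K where "K = (\<lambda>(t::real, s::real). f t * g s)"
  define K1 where "K1 p = indicator {(t, s). s \<le> t} p *\<^sub>R K p" for p
  define K2 where "K2 p = indicator {(t, s). t < s} p *\<^sub>R K p" for p
  have K: "integrable (lborel \<Otimes>\<^sub>M lborel) K"
    unfolding K_def by (rule integrable_pair_lborel_mult[OF f g])
  have "{p \<in> space (lborel \<Otimes>\<^sub>M lborel). snd p \<le> (fst p :: real)} \<in> sets (lborel \<Otimes>\<^sub>M lborel)"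
    "{p \<in> space (lborel \<Otimes>\<^sub>M lborel). fst p < (snd p :: real)} \<in> sets (lborel \<Otimes>\<^sub>M lborel)"
    by measurable
  then have "{(t::real, s). s \<le> t} \<in> sets (lborel \<Otimes>\<^sub>M lborel)" "{(t::real, s). t < s} \<in> sets (lborel \<Otimes>\<^sub>M lborel)"
    by (simp_all add: space_pair_measure case_prod_beta')
  then have K1: "integrable (lborel \<Otimes>\<^sub>M lborel) K1" and K2: "integrable (lborel \<Otimes>\<^sub>M lborel) K2"
    unfolding K1_def K2_def using K by (auto intro: integrable_mult_indicator)
  have K1_fst: "(\<integral>s. K1 (t, s) \<partial>lborel) = f t * (LINT s:{..t}|lborel. g s)" for t
    unfolding K1_def K_def set_lebesgue_integral_def
    by (simp add: indicator_def if_distrib integral_mult_right_zero[symmetric] cong: if_cong)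
  have K2_snd: "(\<integral>t. K2 (t, s) \<partial>lborel) = (LINT t:{..<s}|lborel. f t) * g s" for s
    unfolding K2_def K_def set_lebesgue_integral_def
    by (simp add: indicator_def if_distrib integral_mult_left_zero[symmetric] cong: if_cong)
  show "integrable lborel (\<lambda>t. f t * (LINT s:{..t}|lborel. g s))"
    using lborel_pair.integrable_fst'[OF K1] unfolding K1_fst .
  show "integrable lborel (\<lambda>s. (LINT t:{..<s}|lborel. f t) * g s)"
    using lborel_pair.integrable_snd[of "curry K2"] K2 by (simp add: K2_snd)
  have "(\<integral>t. f t * (LINT s:{..t}|lborel. g s) \<partial>lborel) = integral\<^sup>L (lborel \<Otimes>\<^sub>M lborel) K1"
    using lborel_pair.integral_fst'[OF K1] unfolding K1_fst .
  moreover have "(\<integral>s. (LINT t:{..<s}|lborel. f t) * g s \<partial>lborel) = integral\<^sup>L (lborel \<Otimes>\<^sub>M lborel) K2"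
    using lborel_pair.integral_snd[of "curry K2"] K2 by (simp add: K2_snd)
  moreover have "integral\<^sup>L (lborel \<Otimes>\<^sub>M lborel) K1 + integral\<^sup>L (lborel \<Otimes>\<^sub>M lborel) K2
      = integral\<^sup>L (lborel \<Otimes>\<^sub>M lborel) K"
    using K1 K2
    by (simp flip: Bochner_Integration.integral_add)
      (auto simp: K1_def K2_def indicator_def intro!: Bochner_Integration.integral_cong)
  moreover have "integral\<^sup>L (lborel \<Otimes>\<^sub>M lborel) K = integral\<^sup>L lborel f * integral\<^sup>L lborel g"
    using lborel_pair.integral_fst'[OF K] unfolding K_def by simp
  ultimately show "(\<integral>t. f t * (LINT s:{..t}|lborel. g s) \<partial>lborel)
      + (\<integral>s. (LINT t:{..<s}|lborel. f t) * g s \<partial>lborel) = integral\<^sup>L lborel f * integral\<^sup>L lborel g"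
    by simp
qed

lemma set_integral_Iic_indicator_Icc:
  fixes g :: "real \<Rightarrow> complex"
  assumes g: "set_integrable lborel {0..x} g" and t: "t \<in> {0..x}"
  shows "(LINT s:{..t}|lborel. indicator {0..x} s *\<^sub>R g s) = (LINT s:{0..t}|lborel. g s)"
    "(LINT s:{..<t}|lborel. indicator {0..x} s *\<^sub>R g s) = (LINT s:{0..t}|lborel. g s)"
proof -
  have pointwise: "indicator {..t} s *\<^sub>R (indicator {0..x} s *\<^sub>R g s) = indicator {0..t} s *\<^sub>R g s"
    for s
    using t by (auto split: split_indicator)
  show Iic: "(LINT s:{..t}|lborel. indicator {0..x} s *\<^sub>R g s) = (LINT s:{0..t}|lborel. g s)"
    unfolding set_lebesgue_integral_def by (simp only: pointwise)
  have meas: "(\<lambda>s. indicator {0..x} s *\<^sub>R g s) \<in> borel_measurable lborel"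
    using g unfolding set_integrable_def by (rule borel_measurable_integrable)
  have "(LINT s:{..<t}|lborel. indicator {0..x} s *\<^sub>R g s)
      = (LINT s:{..t}|lborel. indicator {0..x} s *\<^sub>R g s)"
    unfolding set_lebesgue_integral_def
  proof (rule integral_cong_AE)
    show "AE s in lborel. indicator {..<t} s *\<^sub>R (indicator {0..x} s *\<^sub>R g s)
        = indicator {..t} s *\<^sub>R (indicator {0..x} s *\<^sub>R g s)"
      using AE_lborel_singleton[of t] by eventually_elim (auto split: split_indicator)
  qed (rule borel_measurable_scaleR[OF borel_measurable_indicator meas]; simp)+
  then show "(LINT s:{..<t}|lborel. indicator {0..x} s *\<^sub>R g s) = (LINT s:{0..t}|lborel. g s)"
    unfolding Iic .
qed

lemma ac_with_deriv_integration_by_parts: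
  fixes F f G g :: "real \<Rightarrow> complex"
  assumes F: "ac_with_deriv I F f" and G: "ac_with_deriv I G g" and x: "0 \<le> x" "{0..x} \<subseteq> I"
  shows "set_integrable lborel {0..x} (\<lambda>t. f t * G t)"
    "set_integrable lborel {0..x} (\<lambda>t. F t * g t)"
    "(LINT t:{0..x}|lborel. f t * G t) + (LINT t:{0..x}|lborel. F t * g t) = F x * G x - F 0 * G 0"
proof -
  define fI where "fI t = indicator {0..x} t *\<^sub>R f t" for t
  define gI where "gI t = indicator {0..x} t *\<^sub>R g t" for t
  have f: "set_integrable lborel {0..x} f" and g: "set_integrable lborel {0..x} g"
    using F G x unfolding ac_with_deriv_def by auto
  have F_eq: "F t = F 0 + (LINT s:{0..t}|lborel. f s)" and G_eq: "G t = G 0 + (LINT s:{0..t}|lborel. g s)"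
    if "t \<in> {0..x}" for t
    using F G x that unfolding ac_with_deriv_def by auto
  have fI: "integrable lborel fI" and gI: "integrable lborel gI"
    using f g unfolding fI_def gI_def set_integrable_def .
  have fI_int: "integral\<^sup>L lborel fI = F x - F 0" and gI_int: "integral\<^sup>L lborel gI = G x - G 0"
    using F_eq[of x] G_eq[of x] x unfolding fI_def gI_def set_lebesgue_integral_def by auto
  have fG: "indicator {0..x} t *\<^sub>R (f t * G t) = G 0 * fI t + fI t * (LINT s:{..t}|lborel. gI s)" for t
  proof (cases "t \<in> {0..x}")
    case True
    then show ?thesis
      using G_eq[OF True] set_integral_Iic_indicator_Icc(1)[OF g True]
      unfolding fI_def gI_def by (simp add: distrib_left)
  qed (simp add: fI_def)
  have Fg: "indicator {0..x} s *\<^sub>R (F s * g s) = F 0 * gI s + (LINT t:{..<s}|lborel. fI t) * gI s" for s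
  proof (cases "s \<in> {0..x}")
    case True
    then show ?thesis
      using F_eq[OF True] set_integral_Iic_indicator_Icc(2)[OF f True]
      unfolding fI_def gI_def by (simp add: distrib_right)
  qed (simp add: gI_def)
  note split = integral_mult_split_diagonal[OF fI gI]
  show "set_integrable lborel {0..x} (\<lambda>t. f t * G t)"
    unfolding set_integrable_def fG using fI split(1) by simp
  show "set_integrable lborel {0..x} (\<lambda>t. F t * g t)"
    unfolding set_integrable_def Fg using gI split(2) by simp
  define X where "X = (\<integral>t. fI t * (LINT s:{..t}|lborel. gI s) \<partial>lborel)"
  define Y where "Y = (\<integral>s. (LINT t:{..<s}|lborel. fI t) * gI s \<partial>lborel)"
  have fG_int: "(LINT t:{0..x}|lborel. f t * G t) = G 0 * (F x - F 0) + X"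
    unfolding set_lebesgue_integral_def[of lborel "{0..x}"] fG X_def
    using fI split(1) by (simp add: fI_int)
  have Fg_int: "(LINT t:{0..x}|lborel. F t * g t) = F 0 * (G x - G 0) + Y"
    unfolding set_lebesgue_integral_def[of lborel "{0..x}"] Fg Y_def
    using gI split(2) by (simp add: gI_int)
  have X: "X = (F x - F 0) * (G x - G 0) - Y"
    using split(3) unfolding X_def Y_def fI_int gI_int by (simp add: algebra_simps)
  show "(LINT t:{0..x}|lborel. f t * G t) + (LINT t:{0..x}|lborel. F t * g t)
      = F x * G x - F 0 * G 0"
    unfolding fG_int Fg_int X by (simp add: algebra_simps)
qed

lemma borel_measurable_cnj [measurable]:
  fixes f :: "'a \<Rightarrow> complex"
  shows "f \<in> borel_measurable M \<Longrightarrow> (\<lambda>x. cnj (f x)) \<in> borel_measurable M"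
  by (rule borel_measurable_continuous_on[where f=cnj]) (auto intro: continuous_intros)

lemma ac_with_deriv_cnj:
  assumes "ac_with_deriv I f g"
  shows "ac_with_deriv I (\<lambda>x. cnj (f x)) (\<lambda>x. cnj (g x))"
  unfolding ac_with_deriv_def
proof
  fix x assume "x \<in> I"
  then have "integrable lborel (\<lambda>t. indicator {0..x} t *\<^sub>R g t)"
    and "f x = f 0 + (LINT t:{0..x}|lborel. g t)"
    using assms unfolding ac_with_deriv_def set_integrable_def by auto
  moreover have "(\<lambda>t. indicator {0..x} t *\<^sub>R cnj (g t)) = (\<lambda>t. cnj (indicator {0..x} t *\<^sub>R g t))"
    by (simp add: fun_eq_iff scaleR_conv_of_real)
  ultimately show "set_integrable lborel {0..x} (\<lambda>x. cnj (g x)) \<and>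
      cnj (f x) = cnj (f 0) + (LINT t:{0..x}|lborel. cnj (g t))"
    unfolding set_integrable_def set_lebesgue_integral_def
    by (simp only: integrable_cnj Bochner_Integration.integral_cnj complex_cnj_add simp_thms)
qed

lemma green_identity_Icc:
  fixes \<phi> \<phi>1 \<psi>1 \<psi>2 :: "real \<Rightarrow> complex"
  assumes \<phi>: "ac_with_deriv I \<phi> \<phi>1" and \<psi>1: "ac_with_deriv I \<psi>1 \<psi>2" and R: "0 \<le> R" "{0..R} \<subseteq> I"
  shows "set_integrable lborel {0..R} (\<lambda>t. cnj (\<phi>1 t) * \<psi>1 t)"
    "set_integrable lborel {0..R} (\<lambda>t. cnj (\<phi> t) * \<psi>2 t)"
    "(LINT t:{0..R}|lborel. cnj (\<phi> t) * (- \<psi>2 t))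
      = (LINT t:{0..R}|lborel. cnj (\<phi>1 t) * \<psi>1 t) + cnj (\<phi> 0) * \<psi>1 0 - cnj (\<phi> R) * \<psi>1 R"
proof -
  note parts = ac_with_deriv_integration_by_parts[OF ac_with_deriv_cnj[OF \<phi>] \<psi>1 R]
  show "set_integrable lborel {0..R} (\<lambda>t. cnj (\<phi>1 t) * \<psi>1 t)"
    "set_integrable lborel {0..R} (\<lambda>t. cnj (\<phi> t) * \<psi>2 t)"
    using parts(1,2) .
  have "(LINT t:{0..R}|lborel. cnj (\<phi> t) * (- \<psi>2 t)) = - (LINT t:{0..R}|lborel. cnj (\<phi> t) * \<psi>2 t)"
    unfolding set_lebesgue_integral_def by simp
  then show "(LINT t:{0..R}|lborel. cnj (\<phi> t) * (- \<psi>2 t))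
      = (LINT t:{0..R}|lborel. cnj (\<phi>1 t) * \<psi>1 t) + cnj (\<phi> 0) * \<psi>1 0 - cnj (\<phi> R) * \<psi>1 R"
    using parts(3) by (simp add: algebra_simps eq_diff_eq)
qed

lemma cmod_power2_ac_with_deriv:
  fixes \<psi> \<psi>1 :: "real \<Rightarrow> complex"
  assumes \<psi>: "ac_with_deriv I \<psi> \<psi>1" and R: "0 \<le> R" "{0..R} \<subseteq> I"
  shows "set_integrable lborel {0..R} (\<lambda>t. Re (cnj (\<psi> t) * \<psi>1 t))"
    "(cmod (\<psi> R))\<^sup>2 = (cmod (\<psi> 0))\<^sup>2 + 2 * (LINT t:{0..R}|lborel. Re (cnj (\<psi> t) * \<psi>1 t))"
proof -
  define q where "q t = Re (cnj (\<psi> t) * \<psi>1 t)" for t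
  note parts = ac_with_deriv_integration_by_parts[OF ac_with_deriv_cnj[OF \<psi>] \<psi> R]
  have sum: "cnj (\<psi>1 t) * \<psi> t + cnj (\<psi> t) * \<psi>1 t = of_real (2 * q t)" for t
  proof -
    have "cnj (\<psi>1 t) * \<psi> t + cnj (\<psi> t) * \<psi>1 t = cnj (\<psi> t) * \<psi>1 t + cnj (cnj (\<psi> t) * \<psi>1 t)"
      by (simp add: mult.commute)
    also have "\<dots> = of_real (2 * q t)"
      unfolding q_def by (rule complex_add_cnj)
    finally show ?thesis .
  qed
  have "set_integrable lborel {0..R} (\<lambda>t. complex_of_real (2 * q t))"
    using set_integral_add(1)[OF parts(1,2)] unfolding sum .
  then have "set_integrable lborel {0..R} (\<lambda>t. 2 * q t)"
    unfolding set_integrable_def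
    by (simp only: scaleR_conv_of_real of_real_mult[symmetric] complex_of_real_integrable_eq) simp
  then show "set_integrable lborel {0..R} (\<lambda>t. Re (cnj (\<psi> t) * \<psi>1 t))"
    unfolding q_def[symmetric] by simp
  have "complex_of_real (2 * (LINT t:{0..R}|lborel. q t)) = cnj (\<psi> R) * \<psi> R - cnj (\<psi> 0) * \<psi> 0"
    using set_integral_add(2)[OF parts(1,2)] parts(3)
    unfolding sum set_integral_complex_of_real by simp
  also have "\<dots> = complex_of_real ((cmod (\<psi> R))\<^sup>2 - (cmod (\<psi> 0))\<^sup>2)"
    unfolding of_real_diff complex_norm_square by (simp add: mult.commute)
  finally show "(cmod (\<psi> R))\<^sup>2 = (cmod (\<psi> 0))\<^sup>2 + 2 * (LINT t:{0..R}|lborel. Re (cnj (\<psi> t) * \<psi>1 t))"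
    unfolding q_def[symmetric] of_real_eq_iff by simp
qed

lemma set_integrable_cnj_mult:
  fixes u v :: "real \<Rightarrow> complex"
  assumes u: "square_integrable I u" and v: "square_integrable I v"
  shows "set_integrable lborel I (\<lambda>x. cnj (u x) * v x)"
proof (rule set_integrable_bound)
  show "set_integrable lborel I (\<lambda>x. (cmod (u x))\<^sup>2 + (cmod (v x))\<^sup>2)"
    using u v unfolding square_integrable_def by (intro set_integral_add) auto
  have [measurable]: "(\<lambda>x. indicator I x *\<^sub>R u x) \<in> borel_measurable lborel"
    "(\<lambda>x. indicator I x *\<^sub>R v x) \<in> borel_measurable lborel"
    using u v unfolding square_integrable_def set_borel_measurable_def by auto
  have "(\<lambda>x. indicator I x *\<^sub>R (cnj (u x) * v x))
      = (\<lambda>x. cnj (indicator I x *\<^sub>R u x) * (indicator I x *\<^sub>R v x))"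
    by (auto simp: indicator_def fun_eq_iff)
  also have "\<dots> \<in> borel_measurable lborel"
    by measurable
  finally show "set_borel_measurable lborel I (\<lambda>x. cnj (u x) * v x)"
    unfolding set_borel_measurable_def .
  have "cmod (u x) * cmod (v x) \<le> (cmod (u x))\<^sup>2 + (cmod (v x))\<^sup>2" for x
    using sum_squares_bound[of "cmod (u x)" "cmod (v x)"]
      mult_nonneg_nonneg[OF norm_ge_zero norm_ge_zero, of "u x" "v x"] by linarith
  then show "AE x in lborel. x \<in> I \<longrightarrow> norm (cnj (u x) * v x) \<le> norm ((cmod (u x))\<^sup>2 + (cmod (v x))\<^sup>2)"
    by (simp add: norm_mult)
qed

section \<open>Half-lines\<close>

lemma set_integrable_Ici_not_eventually_norm_ge:
  fixes h :: "real \<Rightarrow> 'a::{banach,second_countable_topology}"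
  assumes h: "set_integrable lborel {0..} h" and c: "0 < c"
  shows "\<not> (\<forall>\<^sub>F t in at_top. c \<le> norm (h t))"
proof
  assume "\<forall>\<^sub>F t in at_top. c \<le> norm (h t)"
  then obtain R0 where R0: "0 \<le> R0" "\<And>t. R0 \<le> t \<Longrightarrow> c \<le> norm (h t)"
    unfolding eventually_at_top_linorder by (metis max.cobounded1 max.cobounded2 order_trans)
  define T where "T = (LINT t:{0..}|lborel. norm (h t))"
  define R where "R = R0 + T / c + 1"
  have "T \<ge> 0"
    unfolding T_def set_lebesgue_integral_def by (rule integral_nonneg_AE) auto
  then have R0_R: "R0 \<le> R"
    using c by (simp add: R_def)
  have "(LINT t:{R0..R}|lborel. c) \<le> T"
    unfolding T_def set_lebesgue_integral_def
  proof (rule integral_mono)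
    show "integrable lborel (\<lambda>t. indicat_real {R0..R} t *\<^sub>R c)"
      by (intro integrable_scaleR_left integrable_real_indicator) (simp_all add: emeasure_lborel_Icc_eq)
    show "integrable lborel (\<lambda>t. indicat_real {0..} t *\<^sub>R norm (h t))"
      using set_integrable_norm[OF h] unfolding set_integrable_def .
    show "indicat_real {R0..R} t *\<^sub>R c \<le> indicat_real {0..} t *\<^sub>R norm (h t)" for t
      using R0 c by (auto simp: indicator_def)
  qed
  moreover have "(LINT t:{R0..R}|lborel. c) = (R - R0) * c"
    using R0_R by (subst set_integral_const) auto
  moreover have "(R - R0) * c = T + c"
    using c by (simp add: R_def field_simps)
  ultimately show False
    using c by simp
qed

lemma tendsto_0_of_set_integrable_Ici:
  fixes h :: "real \<Rightarrow> 'a::{banach,second_countable_topology}"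
  assumes h: "set_integrable lborel {0..} h" and lim: "(h \<longlongrightarrow> l) at_top"
  shows "l = 0"
proof (rule ccontr)
  assume "l \<noteq> 0"
  then have "\<forall>\<^sub>F t in at_top. norm l / 2 < norm (h t)"
    using order_tendstoD(1)[OF tendsto_norm[OF lim], of "norm l / 2"] by simp
  then have "\<forall>\<^sub>F t in at_top. norm l / 2 \<le> norm (h t)"
    by (rule eventually_mono) simp
  then show False
    using set_integrable_Ici_not_eventually_norm_ge[OF h, of "norm l / 2"] \<open>l \<noteq> 0\<close> by simp
qed

lemma filterlim_set_integral_Icc_at_top:
  fixes q :: "real \<Rightarrow> real"
  assumes q: "\<And>R. 0 \<le> R \<Longrightarrow> set_integrable lborel {0..R} q" and ge: "\<forall>\<^sub>F t in at_top. 1 \<le> q t"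
  shows "filterlim (\<lambda>R. LINT t:{0..R}|lborel. q t) at_top at_top"
proof -
  obtain R1 where R1: "0 \<le> R1" "\<And>t. R1 \<le> t \<Longrightarrow> 1 \<le> q t"
    using ge unfolding eventually_at_top_linorder by (metis max.cobounded1 max.cobounded2 order_trans)
  have "((LINT t:{0..R1}|lborel. q t) - R1) + R \<le> (LINT t:{0..R}|lborel. q t)" if R: "R1 \<le> R" for R
  proof -
    have q_R1: "set_integrable lborel {0..R1} q" and q_tail: "set_integrable lborel {R1<..R} q"
      using q[of R] R R1(1) by (auto intro: set_integrable_subset)
    have "R - R1 = (LINT t:{R1<..R}|lborel. (1::real))"
      using R by (simp add: set_integral_const)
    also have "\<dots> \<le> (LINT t:{R1<..R}|lborel. q t)"
      using q_tail R1(2) R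
      by (intro set_integral_mono)
        (auto intro!: integrable_real_indicator simp: set_integrable_def emeasure_lborel_Ioc)
    also have "(LINT t:{0..R1}|lborel. q t) + \<dots> = (LINT t:{0..R}|lborel. q t)"
    proof -
      have "{0..R} = {0..R1} \<union> {R1<..R}"
        using R R1(1) by auto
      moreover have "(LINT t:{0..R1} \<union> {R1<..R}|lborel. q t)
          = (LINT t:{0..R1}|lborel. q t) + (LINT t:{R1<..R}|lborel. q t)"
        by (rule set_integral_Un[OF _ q_R1 q_tail]) auto
      ultimately show ?thesis
        by simp
    qed
    finally show ?thesis
      by simp
  qed
  then show ?thesis
    by (intro filterlim_at_top_mono[OF filterlim_tendsto_add_at_top[OF tendsto_const filterlim_ident]])
      (auto simp: eventually_at_top_linorder)
qed

lemma LIMSEQ_indicator_Icc_real_of_nat: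
  fixes f :: "real \<Rightarrow> 'a::real_normed_vector"
  shows "(\<lambda>n. indicator {0..real n} x *\<^sub>R f x) \<longlonglongrightarrow> indicator {0..} x *\<^sub>R f x"
proof (rule tendsto_eventually)
  show "\<forall>\<^sub>F n in sequentially. indicator {0..real n} x *\<^sub>R f x = indicator {0..} x *\<^sub>R f x"
    unfolding eventually_sequentially
  proof (intro exI allI impI)
    fix n assume "nat \<lceil>x\<rceil> \<le> n"
    then have "x \<le> real n"
      by linarith
    then show "indicator {0..real n} x *\<^sub>R f x = indicator {0..} x *\<^sub>R f x"
      by (auto simp: indicator_def)
  qed
qed

lemma square_integrable_Ici_of_bdd:
  fixes h :: "real \<Rightarrow> complex"
  assumes h: "\<And>R. 0 \<le> R \<Longrightarrow> set_integrable lborel {0..R} h"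
    and h2: "\<And>R. 0 \<le> R \<Longrightarrow> set_integrable lborel {0..R} (\<lambda>x. (cmod (h x))\<^sup>2)"
    and bdd: "bdd_above ((\<lambda>R. LINT x:{0..R}|lborel. (cmod (h x))\<^sup>2) ` {0..})"
  shows "square_integrable {0..} h"
proof -
  have meas: "(\<lambda>x. indicator {0..} x *\<^sub>R h x) \<in> borel_measurable lborel"
  proof (rule borel_measurable_LIMSEQ_metric[OF _ LIMSEQ_indicator_Icc_real_of_nat])
    show "(\<lambda>x. indicator {0..real n} x *\<^sub>R h x) \<in> borel_measurable lborel" for n
      using h[of "real n"] unfolding set_integrable_def by (auto intro: borel_measurable_integrable)
  qed
  have mono: "incseq (\<lambda>n. LINT x:{0..real n}|lborel. (cmod (h x))\<^sup>2)"
    unfolding incseq_def set_lebesgue_integral_def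
    by (intro allI impI integral_mono) (use h2 in \<open>auto simp: set_integrable_def indicator_def\<close>)
  have "integrable lborel (\<lambda>x. indicator {0..} x *\<^sub>R (cmod (h x))\<^sup>2)"
  proof (rule integrable_monotone_convergence)
    show "integrable lborel (\<lambda>x. indicator {0..real n} x *\<^sub>R (cmod (h x))\<^sup>2)" for n
      using h2[of "real n"] unfolding set_integrable_def by simp
    show "AE x in lborel. mono (\<lambda>n. indicator {0..real n} x *\<^sub>R (cmod (h x))\<^sup>2)"
      by (auto simp: mono_def indicator_def)
    show "AE x in lborel. (\<lambda>n. indicator {0..real n} x *\<^sub>R (cmod (h x))\<^sup>2)
        \<longlonglongrightarrow> indicator {0..} x *\<^sub>R (cmod (h x))\<^sup>2"
      using LIMSEQ_indicator_Icc_real_of_nat[of _ "\<lambda>x. (cmod (h x))\<^sup>2"] by simp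
    have "bdd_above (range (\<lambda>n. LINT x:{0..real n}|lborel. (cmod (h x))\<^sup>2))"
      using bdd by (rule bdd_above_mono) auto
    then show "(\<lambda>n. integral\<^sup>L lborel (\<lambda>x. indicator {0..real n} x *\<^sub>R (cmod (h x))\<^sup>2))
        \<longlonglongrightarrow> (SUP n. LINT x:{0..real n}|lborel. (cmod (h x))\<^sup>2)"
      using LIMSEQ_incseq_SUP mono unfolding set_lebesgue_integral_def by blast
    have "(\<lambda>x. (norm (indicator {0..} x *\<^sub>R h x))\<^sup>2) \<in> borel_measurable lborel"
      using meas by measurable
    then show "(\<lambda>x. indicator {0..} x *\<^sub>R (cmod (h x))\<^sup>2) \<in> borel_measurable lborel"
      by (rule measurable_cong[THEN iffD1, rotated]) (simp add: indicator_def)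
  qed
  then show ?thesis
    using meas unfolding square_integrable_def set_integrable_def set_borel_measurable_def by simp
qed

lemma set_integral_mono_set_nonneg:
  fixes f :: "'a \<Rightarrow> real"
  assumes "set_integrable M A f" "set_integrable M B f" "A \<subseteq> B" "\<And>x. x \<in> B \<Longrightarrow> 0 \<le> f x"
  shows "(LINT x:A|M. f x) \<le> (LINT x:B|M. f x)"
  using assms unfolding set_integrable_def set_lebesgue_integral_def
  by (intro integral_mono) (auto simp: indicator_def)

lemma not_square_integrable_Ici_of_filterlim:
  fixes \<psi> \<psi>1 :: "real \<Rightarrow> complex"
  assumes \<psi>: "ac_with_deriv {0..} \<psi> \<psi>1" and lim: "filterlim (\<lambda>R. Re (cnj (\<psi> R) * \<psi>1 R)) at_top at_top"
  shows "\<not> square_integrable {0..} \<psi>"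
proof
  assume sq: "square_integrable {0..} \<psi>"
  have "\<forall>\<^sub>F t in at_top. 1 \<le> Re (cnj (\<psi> t) * \<psi>1 t)"
    using lim by (simp add: filterlim_at_top)
  then have "filterlim (\<lambda>R. LINT t:{0..R}|lborel. Re (cnj (\<psi> t) * \<psi>1 t)) at_top at_top"
    by (intro filterlim_set_integral_Icc_at_top cmod_power2_ac_with_deriv(1)[OF \<psi>]) auto
  then have "filterlim (\<lambda>R. 2 * (LINT t:{0..R}|lborel. Re (cnj (\<psi> t) * \<psi>1 t))) at_top at_top"
    by (rule filterlim_tendsto_pos_mult_at_top[OF tendsto_const, rotated]) simp
  then have lim_sum: "filterlim (\<lambda>R. (cmod (\<psi> 0))\<^sup>2 + 2 * (LINT t:{0..R}|lborel. Re (cnj (\<psi> t) * \<psi>1 t)))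
      at_top at_top"
    by (rule filterlim_tendsto_add_at_top[OF tendsto_const])
  have eq: "\<forall>\<^sub>F R in at_top. (cmod (\<psi> 0))\<^sup>2 + 2 * (LINT t:{0..R}|lborel. Re (cnj (\<psi> t) * \<psi>1 t))
      = (cmod (\<psi> R))\<^sup>2"
    using eventually_ge_at_top[of 0]
  proof (rule eventually_mono)
    show "(cmod (\<psi> 0))\<^sup>2 + 2 * (LINT t:{0..R}|lborel. Re (cnj (\<psi> t) * \<psi>1 t)) = (cmod (\<psi> R))\<^sup>2"
      if "0 \<le> R" for R
      using cmod_power2_ac_with_deriv(2)[OF \<psi> that] by force
  qed
  have "filterlim (\<lambda>R. (cmod (\<psi> R))\<^sup>2) at_top at_top"
    using lim_sum unfolding filterlim_cong[OF refl refl eq] .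
  then have "\<forall>\<^sub>F R in at_top. 1 \<le> norm ((cmod (\<psi> R))\<^sup>2)"
    by (simp add: filterlim_at_top)
  moreover have "set_integrable lborel {0..} (\<lambda>x. (cmod (\<psi> x))\<^sup>2)"
    using sq unfolding square_integrable_def by simp
  ultimately show False
    using set_integrable_Ici_not_eventually_norm_ge[of "\<lambda>x. (cmod (\<psi> x))\<^sup>2" 1] by simp
qed

lemma filterlim_at_top_if_mono_unbounded:
  fixes \<Phi> :: "real \<Rightarrow> real"
  assumes mono: "\<And>R R'. 0 \<le> R \<Longrightarrow> R \<le> R' \<Longrightarrow> \<Phi> R \<le> \<Phi> R'"
    and unbounded: "\<not> bdd_above (\<Phi> ` {0..})"
  shows "filterlim \<Phi> at_top at_top"
  unfolding filterlim_at_top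
proof
  fix Z
  have "\<exists>R0\<ge>0. Z \<le> \<Phi> R0"
  proof (rule ccontr)
    assume contra: "\<not> (\<exists>R0\<ge>0. Z \<le> \<Phi> R0)"
    have "\<Phi> R \<le> Z" if "0 \<le> R" for R
    proof -
      have "\<not> Z \<le> \<Phi> R"
        using contra that by blast
      then show ?thesis
        by simp
    qed
    then have "bdd_above (\<Phi> ` {0..})"
      by (intro bdd_aboveI2) auto
    with unbounded show False ..
  qed
  then obtain R0 where R0: "0 \<le> R0" "Z \<le> \<Phi> R0"
    by blast
  show "\<forall>\<^sub>F R in at_top. Z \<le> \<Phi> R"
    unfolding eventually_at_top_linorder
  proof (intro exI allI impI)
    fix R assume "R0 \<le> R"
    then show "Z \<le> \<Phi> R"
      using mono[OF R0(1)] R0(2) by (meson order.trans)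
  qed
qed

lemma integral_cmod_deriv_power2_le:
  fixes \<psi> \<psi>1 \<psi>2 :: "real \<Rightarrow> complex"
  assumes "edge_H2 {0..} \<psi> \<psi>1 \<psi>2" and R: "0 \<le> R"
  shows "set_integrable lborel {0..R} (\<lambda>x. (cmod (\<psi>1 x))\<^sup>2)"
    "(LINT x:{0..R}|lborel. (cmod (\<psi>1 x))\<^sup>2) \<le> Re (cnj (\<psi> R) * \<psi>1 R)
      + (LINT t:{0..}|lborel. norm (cnj (\<psi> t) * \<psi>2 t)) + norm (cnj (\<psi> 0) * \<psi>1 0)"
proof -
  have \<psi>: "square_integrable {0..} \<psi>" "ac_with_deriv {0..} \<psi> \<psi>1"
    and \<psi>1: "ac_with_deriv {0..} \<psi>1 \<psi>2" and \<psi>2: "square_integrable {0..} \<psi>2"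
    using assms unfolding edge_H2_def by auto
  have "{0..R} \<subseteq> {0..}"
    by auto
  note G = green_identity_Icc[OF \<psi>(2) \<psi>1 R this]
  have norm_sq: "cnj z * z = complex_of_real ((cmod z)\<^sup>2)" for z
    by (subst complex_norm_square) (rule mult.commute)
  show "set_integrable lborel {0..R} (\<lambda>x. (cmod (\<psi>1 x))\<^sup>2)"
    using G(1) unfolding norm_sq set_integrable_def
    by (simp add: scaleR_conv_of_real complex_of_real_integrable_eq[symmetric])
  define \<Phi> where "\<Phi> = (LINT x:{0..R}|lborel. (cmod (\<psi>1 x))\<^sup>2)"
  define J where "J = (LINT t:{0..R}|lborel. cnj (\<psi> t) * \<psi>2 t)"
  have "(LINT t:{0..R}|lborel. cnj (\<psi>1 t) * \<psi>1 t) = complex_of_real \<Phi>"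
    unfolding norm_sq \<Phi>_def set_integral_complex_of_real ..
  moreover have "(LINT t:{0..R}|lborel. cnj (\<psi> t) * (- \<psi>2 t)) = - J"
    unfolding J_def set_lebesgue_integral_def by simp
  ultimately have "cnj (\<psi> R) * \<psi>1 R = complex_of_real \<Phi> + cnj (\<psi> 0) * \<psi>1 0 + J"
    using G(3) by (simp add: algebra_simps eq_diff_eq)
  then have "Re (cnj (\<psi> R) * \<psi>1 R) = \<Phi> + Re (cnj (\<psi> 0) * \<psi>1 0) + Re J"
    by (simp only: plus_complex.sel Re_complex_of_real)
  moreover have "norm J \<le> (LINT t:{0..R}|lborel. norm (cnj (\<psi> t) * \<psi>2 t))"
    unfolding J_def by (rule set_integral_norm_bound[OF G(2)])
  moreover have "\<dots> \<le> (LINT t:{0..}|lborel. norm (cnj (\<psi> t) * \<psi>2 t))"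
    by (rule set_integral_mono_set_nonneg[OF set_integrable_norm[OF G(2)]
          set_integrable_norm[OF set_integrable_cnj_mult[OF \<psi>(1) \<psi>2]]]) auto
  ultimately show "\<Phi> \<le> Re (cnj (\<psi> R) * \<psi>1 R)
      + (LINT t:{0..}|lborel. norm (cnj (\<psi> t) * \<psi>2 t)) + norm (cnj (\<psi> 0) * \<psi>1 0)"
    using abs_Re_le_cmod[of J] abs_Re_le_cmod[of "cnj (\<psi> 0) * \<psi>1 0"] by linarith
qed

text \<open>If \<open>\<psi>'\<close> were not square integrable, the energy estimate above would make
  \<open>Re (cnj \<psi> \<psi>') = (|\<psi>|\<^sup>2)'/2\<close> tend to infinity, which is impossible for \<open>\<psi> \<in> L\<^sup>2\<close>.\<close>

lemma square_integrable_deriv_Ici: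
  fixes \<psi> \<psi>1 \<psi>2 :: "real \<Rightarrow> complex"
  assumes \<psi>: "edge_H2 {0..} \<psi> \<psi>1 \<psi>2"
  shows "square_integrable {0..} \<psi>1"
proof (rule ccontr)
  assume not_sq: "\<not> square_integrable {0..} \<psi>1"
  define \<Phi> where "\<Phi> R = (LINT x:{0..R}|lborel. (cmod (\<psi>1 x))\<^sup>2)" for R
  define C where "C = (LINT t:{0..}|lborel. norm (cnj (\<psi> t) * \<psi>2 t)) + norm (cnj (\<psi> 0) * \<psi>1 0)"
  note energy = integral_cmod_deriv_power2_le[OF \<psi>]
  have ac: "ac_with_deriv {0..} \<psi> \<psi>1"
    using \<psi> unfolding edge_H2_def by auto
  have "\<not> bdd_above (\<Phi> ` {0..})"
  proof
    assume "bdd_above (\<Phi> ` {0..})"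
    moreover have "\<And>R. 0 \<le> R \<Longrightarrow> set_integrable lborel {0..R} \<psi>1"
      using ac unfolding ac_with_deriv_def by auto
    ultimately have "square_integrable {0..} \<psi>1"
      using energy(1) unfolding \<Phi>_def by (intro square_integrable_Ici_of_bdd)
    with not_sq show False ..
  qed
  moreover have "\<Phi> R \<le> \<Phi> R'" if "0 \<le> R" "R \<le> R'" for R R'
    unfolding \<Phi>_def using energy(1) that by (intro set_integral_mono_set_nonneg) auto
  ultimately have "filterlim \<Phi> at_top at_top"
    by (intro filterlim_at_top_if_mono_unbounded)
  then have "filterlim (\<lambda>R. - C + \<Phi> R) at_top at_top"
    by (rule filterlim_tendsto_add_at_top[OF tendsto_const])
  moreover have "\<forall>\<^sub>F R in at_top. - C + \<Phi> R \<le> Re (cnj (\<psi> R) * \<psi>1 R)"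
    unfolding eventually_at_top_linorder C_def \<Phi>_def using energy(2) by (intro exI[of _ 0]) force
  ultimately have "filterlim (\<lambda>R. Re (cnj (\<psi> R) * \<psi>1 R)) at_top at_top"
    by (rule filterlim_at_top_mono)
  then show False
    using not_square_integrable_Ici_of_filterlim[OF ac] \<psi> unfolding edge_H2_def by blast
qed

lemma green_identity_Ici:
  fixes \<phi> \<phi>1 \<phi>2 \<psi> \<psi>1 \<psi>2 :: "real \<Rightarrow> complex"
  assumes \<phi>: "edge_H2 {0..} \<phi> \<phi>1 \<phi>2" and \<psi>: "edge_H2 {0..} \<psi> \<psi>1 \<psi>2"
  shows "(LINT x:{0..}|lborel. cnj (\<phi> x) * (- \<psi>2 x))
    = (LINT x:{0..}|lborel. cnj (\<phi>1 x) * \<psi>1 x) + cnj (\<phi> 0) * \<psi>1 0"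
proof -
  have \<phi>_sq: "square_integrable {0..} \<phi>" and \<phi>_ac: "ac_with_deriv {0..} \<phi> \<phi>1"
    and \<psi>1_ac: "ac_with_deriv {0..} \<psi>1 \<psi>2" and \<psi>2_sq: "square_integrable {0..} \<psi>2"
    using \<phi> \<psi> unfolding edge_H2_def by auto
  note \<phi>1_sq = square_integrable_deriv_Ici[OF \<phi>] and \<psi>1_sq = square_integrable_deriv_Ici[OF \<psi>]
  have int_11: "set_integrable lborel {0..} (\<lambda>t. cnj (\<phi>1 t) * \<psi>1 t)"
    by (rule set_integrable_cnj_mult[OF \<phi>1_sq \<psi>1_sq])
  have int_02: "set_integrable lborel {0..} (\<lambda>t. cnj (\<phi> t) * (- \<psi>2 t))"
    using set_integrable_cnj_mult[OF \<phi>_sq \<psi>2_sq] unfolding set_integrable_def by simp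
  define L where "L = (LINT t:{0..}|lborel. cnj (\<phi>1 t) * \<psi>1 t) + cnj (\<phi> 0) * \<psi>1 0
    - (LINT t:{0..}|lborel. cnj (\<phi> t) * (- \<psi>2 t))"
  have "((\<lambda>R. (LINT t:{0..R}|lborel. cnj (\<phi>1 t) * \<psi>1 t) + cnj (\<phi> 0) * \<psi>1 0
      - (LINT t:{0..R}|lborel. cnj (\<phi> t) * (- \<psi>2 t))) \<longlongrightarrow> L) at_top"
    unfolding L_def
    by (intro tendsto_intros tendsto_set_lebesgue_integral_at_top int_11 int_02) auto
  moreover have "\<forall>\<^sub>F R in at_top. (LINT t:{0..R}|lborel. cnj (\<phi>1 t) * \<psi>1 t) + cnj (\<phi> 0) * \<psi>1 0
      - (LINT t:{0..R}|lborel. cnj (\<phi> t) * (- \<psi>2 t)) = cnj (\<phi> R) * \<psi>1 R"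
    using eventually_ge_at_top[of 0]
  proof (rule eventually_mono)
    fix R :: real assume "0 \<le> R"
    then show "(LINT t:{0..R}|lborel. cnj (\<phi>1 t) * \<psi>1 t) + cnj (\<phi> 0) * \<psi>1 0
        - (LINT t:{0..R}|lborel. cnj (\<phi> t) * (- \<psi>2 t)) = cnj (\<phi> R) * \<psi>1 R"
      using green_identity_Icc(3)[OF \<phi>_ac \<psi>1_ac, of R] by simp
  qed
  ultimately have "((\<lambda>R. cnj (\<phi> R) * \<psi>1 R) \<longlongrightarrow> L) at_top"
    by (rule Lim_transform_eventually)
  then have "L = 0"
    by (rule tendsto_0_of_set_integrable_Ici[OF set_integrable_cnj_mult[OF \<phi>_sq \<psi>1_sq]])
  then show ?thesis
    unfolding L_def by (simp add: eq_diff_eq)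
qed

section \<open>The quadratic form\<close>

lemma green_identity_edge:
  fixes \<phi> \<phi>1 \<phi>2 \<psi> \<psi>1 \<psi>2 :: "real \<Rightarrow> complex"
  assumes a_pos: "\<forall>i<nI. a i > 0" and j: "j < nE + nI"
    and \<phi>: "edge_H2 (edge_int nE a j) \<phi> \<phi>1 \<phi>2" and \<psi>: "edge_H2 (edge_int nE a j) \<psi> \<psi>1 \<psi>2"
  shows "(LINT x:edge_int nE a j|lborel. cnj (\<phi> x) * (- \<psi>2 x))
    = (LINT x:edge_int nE a j|lborel. cnj (\<phi>1 x) * \<psi>1 x) + cnj (\<phi> 0) * \<psi>1 0
      - (if j < nE then 0 else cnj (\<phi> (a (j - nE))) * \<psi>1 (a (j - nE)))"
proof (cases "j < nE")
  case True
  then show ?thesis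
    using green_identity_Ici[of \<phi> \<phi>1 \<phi>2 \<psi> \<psi>1 \<psi>2] \<phi> \<psi> by (simp add: edge_int_def)
next
  case False
  then have "0 \<le> a (j - nE)"
    using a_pos j by (auto intro: less_imp_le)
  then show ?thesis
    using green_identity_Icc(3)[of "{0..a (j - nE)}" \<phi> \<phi>1 \<psi>1 \<psi>2 "a (j - nE)"] \<phi> \<psi> False
    by (simp add: edge_int_def edge_H2_def)
qed

lemma kinner_Qmat_bvals:
  "kinner (bvals nE nI a \<phi> \<phi>1) (Qmat (nE + 2 * nI) *\<^sub>v bvals nE nI a \<psi> \<psi>1)
    = (\<Sum>j<nE + nI. cnj (\<phi> j 0) * \<psi>1 j 0) - (\<Sum>i<nI. cnj (\<phi> (nE + i) (a i)) * \<psi>1 (nE + i) (a i))"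
proof -
  let ?n = "nE + 2 * nI" and ?f = "\<lambda>k. cnj (bvals nE nI a \<phi> \<phi>1 $ k) * bvals nE nI a \<psi> \<psi>1 $ (nE + 2 * nI + k)"
  have n: "nE + 2 * nI = (nE + nI) + nI"
    by simp
  have "kinner (bvals nE nI a \<phi> \<phi>1) (Qmat ?n *\<^sub>v bvals nE nI a \<psi> \<psi>1) = (\<Sum>k<?n. ?f k)"
    by (rule kinner_Qmat) (auto simp: bvals_def intro!: carrier_vecI)
  also have "\<dots> = (\<Sum>k<(nE + nI) + nI. ?f k)"
    by (simp only: n)
  also have "\<dots> = (\<Sum>k<nE + nI. ?f k) + (\<Sum>i<nI. ?f (nE + nI + i))"
    by (rule sum_lessThan_add)
  also have "(\<Sum>k<nE + nI. ?f k) = (\<Sum>j<nE + nI. cnj (\<phi> j 0) * \<psi>1 j 0)"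
    by (rule sum.cong) (auto simp: bvals_def Let_def)
  also have "(\<Sum>i<nI. ?f (nE + nI + i)) = - (\<Sum>i<nI. cnj (\<phi> (nE + i) (a i)) * \<psi>1 (nE + i) (a i))"
    by (subst sum_negf[symmetric], rule sum.cong) (auto simp: bvals_def Let_def)
  finally show ?thesis
    by simp
qed

theorem proposition3p5:
  fixes nE nI :: nat and a :: "nat \<Rightarrow> real" and A B P :: "complex mat"
    and \<phi> \<phi>1 \<phi>2 \<psi> \<psi>1 \<psi>2 :: "nat \<Rightarrow> real \<Rightarrow> complex"
  assumes a_pos: "\<forall>i<nI. a i > 0"
    and A: "A \<in> carrier_mat (nE + 2 * nI) (nE + 2 * nI)"
    and B: "B \<in> carrier_mat (nE + 2 * nI) (nE + 2 * nI)"
    and rank: "maximal_rank (nE + 2 * nI) A B"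
    and selfadj: "A * mat_adjoint B = mat_adjoint (A * mat_adjoint B)"
    and P: "is_orth_proj (2 * (nE + 2 * nI)) (MAB (nE + 2 * nI) A B) P"
    and \<phi>: "in_dom nE nI a A B \<phi> \<phi>1 \<phi>2"
    and \<psi>: "in_dom nE nI a A B \<psi> \<psi>1 \<psi>2"
  shows "(\<Sum>j<nE + nI. LINT x:edge_int nE a j|lborel. cnj (\<phi> j x) * (- \<psi>2 j x))
           = (\<Sum>j<nE + nI. LINT x:edge_int nE a j|lborel. cnj (\<phi>1 j x) * \<psi>1 j x)
             + kinner (bvals nE nI a \<phi> \<phi>1) ((P * Qmat (nE + 2 * nI) * P) *\<^sub>v bvals nE nI a \<psi> \<psi>1)
         \<and> P * Qmat (nE + 2 * nI) * P = QAB A B"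
proof
  let ?n = "nE + 2 * nI"
  interpret maximal_isotropic_pair ?n A B
    using A B rank selfadj by unfold_locales
  have MAB_diff: "x - y \<in> MAB ?n A B" if "x \<in> MAB ?n A B" "y \<in> MAB ?n A B" for x y
    using MAB_diff[OF A B that] .
  show "P * Qmat ?n * P = QAB A B"
    using is_orth_proj_unique[OF P is_orth_proj_MAB MAB_diff] projection_Qmat_projection by simp
  have "kinner (bvals nE nI a \<phi> \<phi>1) ((P * Qmat ?n * P) *\<^sub>v bvals nE nI a \<psi> \<psi>1)
      = kinner (bvals nE nI a \<phi> \<phi>1) (Qmat ?n *\<^sub>v bvals nE nI a \<psi> \<psi>1)"
    using \<phi> \<psi> unfolding in_dom_def
    by (intro kinner_orth_proj_sandwich[OF P MAB_diff MAB_carrier]) (auto intro!: carrier_matI)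
  also have "\<dots> = (\<Sum>j<nE + nI. cnj (\<phi> j 0) * \<psi>1 j 0)
      - (\<Sum>i<nI. cnj (\<phi> (nE + i) (a i)) * \<psi>1 (nE + i) (a i))"
    by (rule kinner_Qmat_bvals)
  moreover have "(\<Sum>j<nE + nI. LINT x:edge_int nE a j|lborel. cnj (\<phi> j x) * (- \<psi>2 j x))
      = (\<Sum>j<nE + nI. (LINT x:edge_int nE a j|lborel. cnj (\<phi>1 j x) * \<psi>1 j x) + cnj (\<phi> j 0) * \<psi>1 j 0
          - (if j < nE then 0 else cnj (\<phi> j (a (j - nE))) * \<psi>1 j (a (j - nE))))"
    using \<phi> \<psi> unfolding in_dom_def by (intro sum.cong refl green_identity_edge[OF a_pos]) auto
  moreover have "(\<Sum>j<nE + nI. if j < nE then 0 else cnj (\<phi> j (a (j - nE))) * \<psi>1 j (a (j - nE)))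
      = (\<Sum>i<nI. cnj (\<phi> (nE + i) (a i)) * \<psi>1 (nE + i) (a i))"
    by (simp add: sum_lessThan_add)
  ultimately show "(\<Sum>j<nE + nI. LINT x:edge_int nE a j|lborel. cnj (\<phi> j x) * (- \<psi>2 j x))
      = (\<Sum>j<nE + nI. LINT x:edge_int nE a j|lborel. cnj (\<phi>1 j x) * \<psi>1 j x)
        + kinner (bvals nE nI a \<phi> \<phi>1) ((P * Qmat ?n * P) *\<^sub>v bvals nE nI a \<psi> \<psi>1)"
    by (simp add: sum.distrib sum_subtractf)
qed

end
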